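(* Let $n\geq 1$ and $k\geq 0$ be integers, let $0\leq i\leq n-1$ and $0\leq j\leq k$, and define \[ i'=\Big\lfloor \frac{(n+1)k-(k+1)i-j}{k+1}\Big\rfloor,\qquad j'=(n+1)k-(k+1)i-j-(k+1)i'. \] If $\pi\in\Gamma^k(n,i;j)$, then $\varphi(\pi)\in\Gamma^k(n,i';j')$.
   Context: For a permutation $\pi=\pi_1\cdots\pi_n$ of $[n]=\{1,\dots,n\}$, $\mathrm{des}(\pi)$ is the number of $m\in[n-1]$ with $\pi_m>\pi_{m+1}$, and $\mathrm{maxdrop}(\pi)=\max\{m-\pi_m:1\leq m\leq n\}$. $A_{n,k}$ is the set of permutations of $[n]$ with $\mathrm{maxdrop}(\pi)\leq k$. For $0\le i\le n-1$ and $0\le j\le k$, $\Gamma^k(n,i;j)$ is the set of $\pi\in A_{n,k}$ with $\mathrm{des}(\pi)=i$ and $\pi_n=n-k+j$. For a permutation $\sigma$ of $[n-1]$ and $1\leq r\leq n$, $\sigma\leftarrow r$ is the permutation of $[n]$ obtained by increasing every entry of $\sigma$ that is $\geq r$ by $1$ and then appending $r$ at the end. The map $\varphi:A_{n,k}\to A_{n,k}$ is defined recursively: $\varphi(1)=1$; for $n\geq 2$ and $\pi\in A_{n,k}$, let $i=\mathrm{des}(\pi)$, $j=\pi_n-n+k$, $i'=\lfloor((n+1)k-(k+1)i-j)/(k+1)\rfloor$, $j'=(n+1)k-(k+1)i-j-(k+1)i'$, let $\pi'$ be the permutation of $[n-1]$ order-isomorphic to $\pi_1\cdots\pi_{n-1}$,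 and set $\varphi(\pi)=\varphi(\pi')\leftarrow(n-k+j')$. *)

theory Defs
  imports Main
begin

text \<open>Permutations of [n] are represented as lists pi = [pi_1, ..., pi_n] of naturals;
  list index m (0-based) stores pi_(m+1).\<close>

definition perm_of :: "nat \<Rightarrow> nat list \<Rightarrow> bool" where
  "perm_of n xs \<longleftrightarrow> length xs = n \<and> distinct xs \<and> set xs = {1..n}"

definition des :: "nat list \<Rightarrow> nat" where
  "des xs = card {m. Suc m < length xs \<and> xs ! m > xs ! Suc m}"

definition maxdrop :: "nat list \<Rightarrow> int" where
  "maxdrop xs = Max {int (Suc m) - int (xs ! m) | m. m < length xs}"

definition A :: "nat \<Rightarrow> nat \<Rightarrow> nat list set" where
  "A n k = {xs. perm_of n xs \<and> maxdrop xs \<le> int k}"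

definition Gamma :: "nat \<Rightarrow> nat \<Rightarrow> int \<Rightarrow> int \<Rightarrow> nat list set" where
  "Gamma k n i j = {xs \<in> A n k. int (des xs) = i \<and> int (last xs) = int n - int k + j}"

definition std :: "nat list \<Rightarrow> nat list" where
  "std xs = map (\<lambda>x. card {y \<in> set xs. y \<le> x}) xs"

definition ins :: "nat list \<Rightarrow> nat \<Rightarrow> nat list" where
  "ins \<sigma> r = map (\<lambda>x. if x \<ge> r then x + 1 else x) \<sigma> @ [r]"

definition iprime :: "nat \<Rightarrow> nat \<Rightarrow> int \<Rightarrow> int \<Rightarrow> int" where
  "iprime n k i j = ((int n + 1) * int k - (int k + 1) * i - j) div (int k + 1)"

definition jprime :: "nat \<Rightarrow> nat \<Rightarrow> int \<Rightarrow> int \<Rightarrow> int" where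
  "jprime n k i j = (int n + 1) * int k - (int k + 1) * i - j - (int k + 1) * iprime n k i j"

function phi :: "nat \<Rightarrow> nat list \<Rightarrow> nat list" where
  "phi k xs = (if length xs \<le> 1 then xs else
     (let n = length xs; i = int (des xs); j = int (last xs) - int n + int k;
          j' = jprime n k i j
      in ins (phi k (std (butlast xs))) (nat (int n - int k + j'))))"
  by pat_completeness auto
termination
  by (relation "measure (\<lambda>(k, xs). length xs)") (auto simp: std_def)

end

theory Submission
  imports Defs
begin

text \<open>Put w(\<pi>) = (k+1)(n - des \<pi>) - \<pi>_n; this is exactly the numerator (n+1)k - (k+1)i - j,
  so i' and j' are the quotient and remainder of w(\<pi>) by k+1. By induction on n, \<phi>(\<pi>) stays in
  A_{n,k}, has w(\<pi>) div (k+1) descents and ends in n - k + w(\<pi>) mod (k+1). In the step, with \<sigma> the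
  standardization of \<pi>_1 ... \<pi>_{n-1}, the maxdrop bound forces 0 \<le> w(\<pi>) - w(\<sigma>) \<le> k. Appending the
  new last entry to \<phi>(\<sigma>) creates a descent exactly when the remainder wraps around, which is
  exactly when the quotient grows by one.\<close>

lemma in_A_iff:
  assumes "1 \<le> n"
  shows "xs \<in> A n k \<longleftrightarrow> perm_of n xs \<and> (\<forall>m<n. Suc m \<le> xs ! m + k)"
proof (cases "length xs = n")
  case True
  have drops: "{int (Suc m) - int (xs ! m) | m. m < length xs}
      = (\<lambda>m. int (Suc m) - int (xs ! m)) ` {..<n}"
    using True by auto
  have "0 \<in> {..<n}" using assms by simp
  then have "maxdrop xs \<le> int k \<longleftrightarrow> (\<forall>m<n. int (Suc m) - int (xs ! m) \<le> int k)"
    unfolding maxdrop_def drops by (subst Max_le_iff) auto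
  also have "\<dots> \<longleftrightarrow> (\<forall>m<n. Suc m \<le> xs ! m + k)" by (intro all_cong) linarith
  finally show ?thesis unfolding A_def by simp
next
  case False
  then show ?thesis unfolding A_def perm_of_def by auto
qed

lemma des_map_strict_mono_on:
  assumes "strict_mono_on (set xs) f"
  shows "des (map f xs) = des xs"
proof -
  have "{m. Suc m < length (map f xs) \<and> map f xs ! m > map f xs ! Suc m} =
     {m. Suc m < length xs \<and> xs ! m > xs ! Suc m}"
    using strict_mono_on_less[OF assms] by (auto simp: nth_mem)
  then show ?thesis unfolding des_def by simp
qed

lemma des_snoc:
  assumes "xs \<noteq> []"
  shows "des (xs @ [a]) = des xs + (if a < last xs then 1 else 0)"
proof -
  let ?D = "{m. Suc m < length xs \<and> xs ! m > xs ! Suc m}"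
  have "{m. Suc m < length (xs @ [a]) \<and> (xs @ [a]) ! m > (xs @ [a]) ! Suc m}
      = ?D \<union> (if a < last xs then {length xs - 1} else {})"
  proof (intro set_eqI iffI)
    fix m assume "m \<in> {m. Suc m < length (xs @ [a]) \<and> (xs @ [a]) ! m > (xs @ [a]) ! Suc m}"
    then show "m \<in> ?D \<union> (if a < last xs then {length xs - 1} else {})"
    proof (cases "Suc m < length xs")
      case False
      then have "m = length xs - 1" using \<open>m \<in> _\<close> by auto
      then show ?thesis using \<open>m \<in> _\<close> assms by (auto simp: nth_append last_conv_nth)
    qed (auto simp: nth_append)
  qed (use assms in \<open>auto simp: nth_append last_conv_nth split: if_splits\<close>)
  moreover have "finite ?D" by (rule finite_subset[of _ "{..<length xs}"]) auto
  moreover have "length xs - 1 \<notin> ?D" by auto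
  ultimately show ?thesis unfolding des_def by auto
qed

lemma des_ins:
  assumes "\<rho> \<noteq> []"
  shows "des (ins \<rho> r) = des \<rho> + (if r \<le> last \<rho> then 1 else 0)"
proof -
  let ?g = "\<lambda>x. if x \<ge> r then x + 1 else x"
  have "strict_mono_on (set \<rho>) ?g" by (rule strict_mono_onI) auto
  then show ?thesis
    using assms by (simp add: ins_def des_snoc des_map_strict_mono_on last_map)
qed

lemma perm_of_butlast:
  assumes "perm_of n \<pi>" "\<pi> \<noteq> []"
  shows "distinct (butlast \<pi>)" "set (butlast \<pi>) = {1..n} - {last \<pi>}" "last \<pi> \<in> {1..n}"
proof -
  have \<pi>: "\<pi> = butlast \<pi> @ [last \<pi>]" using assms(2) by simp
  have "distinct (butlast \<pi> @ [last \<pi>])" "set (butlast \<pi> @ [last \<pi>]) = {1..n}"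
    using assms(1) unfolding perm_of_def by (simp_all flip: \<pi>)
  then show "distinct (butlast \<pi>)" "set (butlast \<pi>) = {1..n} - {last \<pi>}" "last \<pi> \<in> {1..n}"
    by auto
qed

lemma std_butlast:
  assumes "perm_of n \<pi>" "\<pi> \<noteq> []"
  shows "std (butlast \<pi>) = map (\<lambda>x. if x < last \<pi> then x else x - 1) (butlast \<pi>)"
  unfolding std_def
proof (rule map_cong[OF refl])
  fix x assume x: "x \<in> set (butlast \<pi>)"
  note set_butlast = perm_of_butlast[OF assms]
  have x_range: "x \<in> {1..n}" "x \<noteq> last \<pi>" using x set_butlast(2) by auto
  have "{y \<in> set (butlast \<pi>). y \<le> x} = {1..x} - {last \<pi>}"
    using x_range(1) unfolding set_butlast(2) by auto
  moreover have "last \<pi> \<in> {1..x} \<longleftrightarrow> \<not> x < last \<pi>"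
    using x_range set_butlast(3) by auto
  ultimately show "card {y \<in> set (butlast \<pi>). y \<le> x} = (if x < last \<pi> then x else x - 1)"
    by (simp add: card_Diff_singleton_if)
qed

lemma perm_of_std_butlast:
  assumes "perm_of (Suc n) \<pi>"
  shows "perm_of n (std (butlast \<pi>))"
proof -
  have ne: "\<pi> \<noteq> []" using assms unfolding perm_of_def by auto
  note set_butlast = perm_of_butlast[OF assms ne]
  define h where "h x = (if x < last \<pi> then x else x - 1)" for x :: nat
  have "inj_on h ({1..Suc n} - {last \<pi>})"
    unfolding h_def by (rule inj_onI) (auto split: if_splits)
  moreover have "h ` ({1..Suc n} - {last \<pi>}) = {1..n}"
  proof (intro equalityI subsetI)
    fix y assume "y \<in> {1..n}"
    then show "y \<in> h ` ({1..Suc n} - {last \<pi>})"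
      by (cases "y < last \<pi>")
        (auto simp: h_def intro: image_eqI[of _ _ y] image_eqI[of _ _ "Suc y"])
  qed (use set_butlast(3) in \<open>auto simp: h_def\<close>)
  moreover have "length (butlast \<pi>) = n" using assms unfolding perm_of_def by simp
  ultimately show ?thesis
    using set_butlast(1,2) std_butlast[OF assms ne]
    unfolding perm_of_def h_def[abs_def] by (simp add: distinct_map)
qed

lemma std_butlast_in_A:
  assumes "\<pi> \<in> A (Suc n) k" "1 \<le> n"
  shows "std (butlast \<pi>) \<in> A n k"
proof -
  have perm: "perm_of (Suc n) \<pi>" and drop: "\<forall>m<Suc n. Suc m \<le> \<pi> ! m + k"
    using assms in_A_iff by auto
  then have len: "length \<pi> = Suc n" and ne: "\<pi> \<noteq> []" and dist: "distinct \<pi>"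
    unfolding perm_of_def by auto
  have last: "last \<pi> = \<pi> ! n" using len ne by (simp add: last_conv_nth)
  have "Suc m \<le> std (butlast \<pi>) ! m + k" if "m < n" for m
  proof -
    have "\<pi> ! m \<noteq> last \<pi>" using that len dist last by (simp add: nth_eq_iff_index_eq)
    moreover have "std (butlast \<pi>) ! m = (if \<pi> ! m < last \<pi> then \<pi> ! m else \<pi> ! m - 1)"
      using that len std_butlast[OF perm ne] by (simp add: nth_butlast)
    ultimately show ?thesis using that drop last by (auto dest: spec[of _ n])
  qed
  then show ?thesis using perm_of_std_butlast[OF perm] in_A_iff[OF assms(2)] by blast
qed

lemma perm_of_ins:
  assumes "perm_of n \<rho>" "1 \<le> r" "r \<le> Suc n"
  shows "perm_of (Suc n) (ins \<rho> r)"
proof -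
  define g where "g x = (if r \<le> x then x + 1 else x)" for x :: nat
  have "inj g" unfolding g_def by (rule injI) (auto split: if_splits)
  moreover have "r \<notin> g ` {1..n}" by (auto simp: g_def)
  moreover have "insert r (g ` {1..n}) = {1..Suc n}"
  proof (intro equalityI subsetI)
    fix y assume "y \<in> {1..Suc n}"
    then consider "y < r" | "y = r" | "r < y" "y - 1 \<in> {1..n}"
      using assms(2) by fastforce
    then show "y \<in> insert r (g ` {1..n})"
    proof cases
      case 1
      then show ?thesis using \<open>y \<in> {1..Suc n}\<close> assms(3) by (auto simp: g_def intro: image_eqI[of _ _ y])
    next
      case 3
      then show ?thesis by (auto simp: g_def intro: image_eqI[of _ _ "y - 1"])
    qed simp
  qed (use assms in \<open>auto simp: g_def\<close>)
  ultimately show ?thesis using assms(1) inj_on_subset[of g UNIV]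
    unfolding perm_of_def ins_def g_def[abs_def] by (auto simp: distinct_map)
qed

lemma ins_in_A:
  assumes "\<rho> \<in> A n k" "1 \<le> n" "1 \<le> r" "r \<le> Suc n" "Suc n \<le> r + k"
  shows "ins \<rho> r \<in> A (Suc n) k"
proof -
  have perm: "perm_of n \<rho>" and drop: "\<forall>m<n. Suc m \<le> \<rho> ! m + k"
    using assms in_A_iff by auto
  have "length \<rho> = n" using perm unfolding perm_of_def by simp
  then have "Suc m \<le> ins \<rho> r ! m + k" if "m < Suc n" for m
    using that drop assms(5) by (cases "m < n") (auto simp: ins_def nth_append)
  then show ?thesis using perm_of_ins[OF perm assms(3,4)] in_A_iff by simp
qed

lemma des_std_butlast:
  assumes "perm_of n \<pi>" "\<pi> \<noteq> []"
  shows "des (std (butlast \<pi>)) = des (butlast \<pi>)"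
proof -
  have "strict_mono_on (set (butlast \<pi>)) (\<lambda>x. if x < last \<pi> then x else x - 1)"
  proof (rule strict_mono_onI)
    fix x y assume "x \<in> set (butlast \<pi>)" "y \<in> set (butlast \<pi>)" "x < y"
    moreover have "last \<pi> \<notin> set (butlast \<pi>)" using perm_of_butlast(2)[OF assms] by simp
    ultimately have "x \<noteq> last \<pi>" "y \<noteq> last \<pi>" "x < y" by auto
    then show "(if x < last \<pi> then x else x - 1) < (if y < last \<pi> then y else y - 1)"
      by auto
  qed
  then show ?thesis using std_butlast[OF assms] by (simp add: des_map_strict_mono_on)
qed

definition weight :: "nat \<Rightarrow> nat list \<Rightarrow> int" where
  "weight k xs = (int k + 1) * (int (length xs) - int (des xs)) - int (last xs)"

lemma weight_eq_numerator:
  "(int (length xs) + 1) * int k - (int k + 1) * int (des xs) - (int (last xs) - int (length xs) + int k)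
    = weight k xs"
  unfolding weight_def by (simp add: algebra_simps)

lemma iprime_eq_weight_div:
  "iprime (length xs) k (int (des xs)) (int (last xs) - int (length xs) + int k)
    = weight k xs div (int k + 1)"
  unfolding iprime_def weight_eq_numerator ..

lemma jprime_eq_weight_mod:
  "jprime (length xs) k (int (des xs)) (int (last xs) - int (length xs) + int k)
    = weight k xs mod (int k + 1)"
  unfolding jprime_def iprime_eq_weight_div weight_eq_numerator by (simp add: minus_mult_div_eq_mod)


declare phi.simps [simp del] \<comment> \<open>the defining equation of \<open>phi\<close> is unguarded and would unfold forever\<close>

lemma phi_eq_ins_weight:
  assumes "2 \<le> length xs"
  shows "phi k xs = ins (phi k (std (butlast xs)))
    (nat (int (length xs) - int k + weight k xs mod (int k + 1)))"
  using assms by (subst phi.simps) (simp add: Let_def jprime_eq_weight_mod)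

lemma ins_position_bounds:
  fixes k :: nat and xs :: "nat list"
  assumes "1 \<le> last xs" "last xs \<le> length xs"
  defines "r \<equiv> nat (int (length xs) - int k + weight k xs mod (int k + 1))"
  shows "int r = int (length xs) - int k + weight k xs mod (int k + 1)"
    and "1 \<le> r" "r \<le> length xs" "length xs \<le> r + k"
proof -
  have mod_bounds: "0 \<le> weight k xs mod (int k + 1)" "weight k xs mod (int k + 1) \<le> int k"
    using pos_mod_bound[of "int k + 1" "weight k xs"] by simp_all
  have r_pos: "1 \<le> int (length xs) - int k + weight k xs mod (int k + 1)"
  proof (cases "length xs \<le> k")
    case True
    have "weight k xs = (int k + 1 - int (last xs)) + (int (length xs) - int (des xs) - 1) * (int k + 1)"
      unfolding weight_def by (simp add: algebra_simps)
    also have "\<dots> mod (int k + 1) = (int k + 1 - int (last xs)) mod (int k + 1)"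
      by (rule mod_mult_self1)
    also have "\<dots> = int k + 1 - int (last xs)"
      using assms True by (intro mod_pos_pos_trivial) linarith+
    finally show ?thesis using assms by simp
  next
    case False
    then show ?thesis using mod_bounds by linarith
  qed
  then show "int r = int (length xs) - int k + weight k xs mod (int k + 1)"
    unfolding r_def by simp
  then show "1 \<le> r" "r \<le> length xs" "length xs \<le> r + k"
    using mod_bounds r_pos by linarith+
qed

lemma weight_std_butlast_bounds:
  assumes "\<pi> \<in> A (Suc n) k" "1 \<le> n"
  shows "0 \<le> weight k \<pi> - weight k (std (butlast \<pi>))"
    and "weight k \<pi> - weight k (std (butlast \<pi>)) \<le> int k"
proof -
  have perm: "perm_of (Suc n) \<pi>" and drop: "\<forall>m<Suc n. Suc m \<le> \<pi> ! m + k"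
    using assms in_A_iff by auto
  then have len: "length \<pi> = Suc n" and dist: "distinct \<pi>" and set: "set \<pi> = {1..Suc n}"
    unfolding perm_of_def by auto
  then have ne: "\<pi> \<noteq> []" and bl_ne: "butlast \<pi> \<noteq> []"
    using assms(2) by (auto simp flip: length_greater_0_conv)
  define u v where "u = last (butlast \<pi>)" and "v = last \<pi>"
  have u: "u = \<pi> ! (n - 1)" and v: "v = \<pi> ! n"
    using len assms(2) ne bl_ne by (simp_all add: u_def v_def last_conv_nth nth_butlast)
  have "\<pi> ! m \<le> Suc n" if "m \<le> n" for m
    using that len set nth_mem[of m \<pi>] by auto
  then have bounds: "u \<noteq> v" "u \<le> Suc n" "v \<le> Suc n" "n \<le> u + k" "Suc n \<le> v + k"
    using u v len dist assms(2) drop[rule_format, of "n - 1"] drop[rule_format, of n]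
    by (auto simp: nth_eq_iff_index_eq)
  have "des \<pi> = des (butlast \<pi>) + (if v < u then 1 else 0)"
    using des_snoc[OF bl_ne, of v] ne by (simp add: u_def v_def)
  moreover have "last (std (butlast \<pi>)) = (if u < v then u else u - 1)"
    using std_butlast[OF perm ne] bl_ne by (simp add: last_map u_def v_def)
  moreover have "length (std (butlast \<pi>)) = n" by (simp add: std_def len)
  ultimately have "weight k \<pi> - weight k (std (butlast \<pi>))
      = (if v < u then int u - 1 - int v else int k + 1 + int u - int v)"
    using len des_std_butlast[OF perm ne] bounds(1)
    unfolding weight_def v_def[symmetric] by (auto simp: algebra_simps of_nat_diff)
  then show "0 \<le> weight k \<pi> - weight k (std (butlast \<pi>))"
    and "weight k \<pi> - weight k (std (butlast \<pi>)) \<le> int k"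
    using bounds by auto
qed

lemma div_add_less_divisor:
  fixes x d m :: int
  assumes "0 \<le> d" "d < m"
  shows "(x + d) div m = x div m + (if (x + d) mod m < x mod m then 1 else 0)"
proof -
  define q b where "q = x div m" and "b = x mod m"
  have b: "0 \<le> b" "b < m" using assms by (simp_all add: b_def)
  have x: "x + d = (b + d) + q * m" by (simp add: q_def b_def)
  have div: "(x + d) div m = q + (b + d) div m" and mod: "(x + d) mod m = (b + d) mod m"
    using assms unfolding x by simp_all
  have "(x + d) div m = q + (if (x + d) mod m < b then 1 else 0)"
  proof (cases "b + d < m")
    case True
    then have "(b + d) div m = 0" "(b + d) mod m = b + d" using assms b by simp_all
    then show ?thesis using assms(1) by (simp add: div mod)
  next
    case False
    then have q1: "(b + d) div m = 1"
      using assms b div_pos_geq[of m "b + d"] by simp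
    moreover have "(b + d) mod m = b + d - m"
      using minus_div_mult_eq_mod[of "b + d" m] q1 by simp
    ultimately show ?thesis using assms(2) by (simp add: div mod)
  qed
  then show ?thesis by (simp add: q_def b_def)
qed

lemma phi_in_A_des_last:
  assumes "\<pi> \<in> A n k" "1 \<le> n"
  shows "phi k \<pi> \<in> A n k \<and> int (des (phi k \<pi>)) = weight k \<pi> div (int k + 1)
    \<and> int (last (phi k \<pi>)) = int n - int k + weight k \<pi> mod (int k + 1)"
  using assms
proof (induction n arbitrary: \<pi>)
  case 0
  then show ?case by simp
next
  case (Suc n)
  then have "perm_of (Suc n) \<pi>" using in_A_iff by auto
  then have len: "length \<pi> = Suc n" and set: "set \<pi> = {1..Suc n}" unfolding perm_of_def by auto
  show ?case
  proof (cases "n = 0")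
    case True
    then have "\<pi> = [1]" using len set by (cases \<pi>) auto
    moreover have "phi k [1] = [1]" by (subst phi.simps) simp
    ultimately show ?thesis using Suc.prems by (simp add: True weight_def des_def)
  next
    case False
    then have n: "1 \<le> n" by simp
    define \<sigma> where "\<sigma> = std (butlast \<pi>)"
    define K where "K = int k + 1"
    define r where "r = nat (int (Suc n) - int k + weight k \<pi> mod K)"
    have "\<sigma> \<in> A n k" unfolding \<sigma>_def using std_butlast_in_A[OF Suc.prems(1) n] .
    note IH = Suc.IH[OF this n, folded K_def]
    have step: "0 \<le> weight k \<pi> - weight k \<sigma>" "weight k \<pi> - weight k \<sigma> < K"
      using weight_std_butlast_bounds[OF Suc.prems(1) n] unfolding \<sigma>_def K_def by auto
    have phi_\<pi>: "phi k \<pi> = ins (phi k \<sigma>) r"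
      using phi_eq_ins_weight[of \<pi> k] n len unfolding \<sigma>_def r_def K_def by simp
    have "\<pi> \<noteq> []" using len by auto
    then have "last \<pi> \<in> {1..Suc n}" using set last_in_set[of \<pi>] by blast
    then have r: "int r = int (Suc n) - int k + weight k \<pi> mod K"
      and r_bounds: "1 \<le> r" "r \<le> Suc n" "Suc n \<le> r + k"
      using ins_position_bounds[of \<pi> k] len unfolding r_def K_def by auto
    have "phi k \<sigma> \<noteq> []" using IH n unfolding A_def perm_of_def by auto
    then have "int (des (phi k \<pi>)) = weight k \<sigma> div K + (if r \<le> last (phi k \<sigma>) then 1 else 0)"
      using IH phi_\<pi> des_ins by simp
    also have "(r \<le> last (phi k \<sigma>)) = (weight k \<pi> mod K < weight k \<sigma> mod K)"
      using IH r by linarith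
    also have "weight k \<sigma> div K + (if weight k \<pi> mod K < weight k \<sigma> mod K then 1 else 0)
        = weight k \<pi> div K"
      using div_add_less_divisor[OF step, of "weight k \<sigma>"] by simp
    finally show ?thesis
      using ins_in_A[OF _ n r_bounds] IH phi_\<pi> r unfolding ins_def K_def by simp
  qed
qed

theorem lemma2p2:
  fixes n k :: nat and i j :: int and \<pi> :: "nat list"
  assumes "n \<ge> 1" and "0 \<le> i" and "i \<le> int n - 1" and "0 \<le> j" and "j \<le> int k"
    and "\<pi> \<in> Gamma k n i j"
  shows "phi k \<pi> \<in> Gamma k n (iprime n k i j) (jprime n k i j)"
proof -
  have \<pi>: "\<pi> \<in> A n k" "int (des \<pi>) = i" "j = int (last \<pi>) - int n + int k"
    using assms(6) unfolding Gamma_def by auto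
  then have "length \<pi> = n" unfolding A_def perm_of_def by simp
  then have "iprime n k i j = weight k \<pi> div (int k + 1)" "jprime n k i j = weight k \<pi> mod (int k + 1)"
    using iprime_eq_weight_div[of \<pi> k] jprime_eq_weight_mod[of \<pi> k] \<pi>(2,3) by simp_all
  then show ?thesis
    using phi_in_A_des_last[OF \<pi>(1) assms(1)] unfolding Gamma_def by simp
qed

end
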